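(* The region $\Phi_{B_b}$ is contiguous along both the $p_1$ and $p_2$ dimensions; $\Phi_{B_1}$ is contiguous along the $p_1$ dimension; and $\Phi_{B_2}$ is contiguous along the $p_2$ dimension.
   Context: Fix parameters $0\le\lambda_0\le\lambda_1\le 1$, a discount factor $\beta\in[0,1)$, and rates $0<R_l<R_h<2R_l$. Let $\alpha=\lambda_1-\lambda_0$ and $T(p)=\alpha p+\lambda_0$. The model consists of two independent, identical Gilbert–Elliott channels with $\Pr[\text{good}\mid\text{good}]=\lambda_1$ and $\Pr[\text{good}\mid\text{bad}]=\lambda_0$. The belief state is $(p_1,p_2)\in[0,1]^2$, and there are three actions, $B_b$, $B_1$ and $B_2$. Let $V:[0,1]^2\to\mathbb R$ be the optimal expected total discounted reward, i.e. the unique bounded function satisfying $V=\max\{V_{B_b},V_{B_1},V_{B_2}\}$, where $V_{B_b}(p_1,p_2)=p_1R_l+p_2R_l+\beta[(1-p_1)(1-p_2)V(\lambda_0,\lambda_0)+p_1(1-p_2)V(\lambda_1,\lambda_0)+(1-p_1)p_2V(\lambda_0,\lambda_1)+p_1p_2V(\lambda_1,\lambda_1)]$, $V_{B_1}(p_1,p_2)=p_1R_h+\beta[(1-p_1)V(\lambda_0,T(p_2))+p_1V(\lambda_1,T(p_2))]$, $V_{B_2}(p_1,p_2)=p_2R_h+\beta[(1-p_2)V(T(p_1),\lambda_0)+p_2V(T(p_1),\lambda_1)]$. For $a\in\{B_b,B_1,B_2\}$, the decision region is $\Phi_a=\{(p_1,p_2)\in[0,1]^2: V(p_1,p_2)=V_a(p_1,p_2)\}$.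 A set $\Phi$ is contiguous along the $p_1$ dimension if $(x_1,p_2)\in\Phi$ and $(x_2,p_2)\in\Phi$ imply $(x,p_2)\in\Phi$ for all $x\in[x_1,x_2]$. Contiguity along the $p_2$ dimension is defined analogously. *)

theory Defs
  imports Complex_Main
begin

text \<open>Belief update T(p) = alpha p + lambda0 with alpha = lambda1 - lambda0.\<close>
definition T :: "real \<Rightarrow> real \<Rightarrow> real \<Rightarrow> real" where
  "T l0 l1 p = (l1 - l0) * p + l0"

definition V_Bb :: "real \<Rightarrow> real \<Rightarrow> real \<Rightarrow> real \<Rightarrow> (real \<Rightarrow> real \<Rightarrow> real) \<Rightarrow> real \<Rightarrow> real \<Rightarrow> real" where
  "V_Bb l0 l1 \<beta> Rl V p1 p2 =
     p1 * Rl + p2 * Rl + \<beta> * ((1 - p1) * (1 - p2) * V l0 l0 + p1 * (1 - p2) * V l1 l0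
        + (1 - p1) * p2 * V l0 l1 + p1 * p2 * V l1 l1)"

definition V_B1 :: "real \<Rightarrow> real \<Rightarrow> real \<Rightarrow> real \<Rightarrow> (real \<Rightarrow> real \<Rightarrow> real) \<Rightarrow> real \<Rightarrow> real \<Rightarrow> real" where
  "V_B1 l0 l1 \<beta> Rh V p1 p2 =
     p1 * Rh + \<beta> * ((1 - p1) * V l0 (T l0 l1 p2) + p1 * V l1 (T l0 l1 p2))"

definition V_B2 :: "real \<Rightarrow> real \<Rightarrow> real \<Rightarrow> real \<Rightarrow> (real \<Rightarrow> real \<Rightarrow> real) \<Rightarrow> real \<Rightarrow> real \<Rightarrow> real" where
  "V_B2 l0 l1 \<beta> Rh V p1 p2 =
     p2 * Rh + \<beta> * ((1 - p2) * V (T l0 l1 p1) l0 + p2 * V (T l0 l1 p1) l1)"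

definition bellman_solution :: "real \<Rightarrow> real \<Rightarrow> real \<Rightarrow> real \<Rightarrow> real \<Rightarrow> (real \<Rightarrow> real \<Rightarrow> real) \<Rightarrow> bool" where
  "bellman_solution l0 l1 \<beta> Rl Rh V \<longleftrightarrow>
     (\<exists>M. \<forall>p1\<in>{0..1}. \<forall>p2\<in>{0..1}. \<bar>V p1 p2\<bar> \<le> M) \<and>
     (\<forall>p1\<in>{0..1}. \<forall>p2\<in>{0..1}.
        V p1 p2 = max (V_Bb l0 l1 \<beta> Rl V p1 p2) (max (V_B1 l0 l1 \<beta> Rh V p1 p2) (V_B2 l0 l1 \<beta> Rh V p1 p2)))"

definition region :: "(real \<Rightarrow> real \<Rightarrow> real) \<Rightarrow> (real \<Rightarrow> real \<Rightarrow> real) \<Rightarrow> (real \<times> real) set" where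
  "region V Va = {(p1, p2). p1 \<in> {0..1} \<and> p2 \<in> {0..1} \<and> V p1 p2 = Va p1 p2}"

definition contiguous_p1 :: "(real \<times> real) set \<Rightarrow> bool" where
  "contiguous_p1 S \<longleftrightarrow> (\<forall>x1 x2 p2 x. (x1, p2) \<in> S \<longrightarrow> (x2, p2) \<in> S \<longrightarrow> x1 \<le> x \<longrightarrow> x \<le> x2 \<longrightarrow> (x, p2) \<in> S)"

definition contiguous_p2 :: "(real \<times> real) set \<Rightarrow> bool" where
  "contiguous_p2 S \<longleftrightarrow> (\<forall>y1 y2 p1 y. (p1, y1) \<in> S \<longrightarrow> (p1, y2) \<in> S \<longrightarrow> y1 \<le> y \<longrightarrow> y \<le> y2 \<longrightarrow> (p1, y) \<in> S)"

end

theory Submission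
  imports Defs "HOL-Analysis.Analysis"
begin

(* Idea: the value function V is convex in each belief coordinate separately,
   whereas every action value V_a is affine (hence concave) in the coordinate(s)
   belonging to the channel(s) that action senses, and V >= V_a everywhere.  On a
   line where a convex function dominates a concave one, the set where they
   coincide is an interval; this set, intersected with the line, is exactly the
   decision region Phi_a, which is therefore contiguous along that coordinate. *)

lemma convex_on_max:
  assumes "convex_on S f" "convex_on S g"
  shows "convex_on S (\<lambda>x. max (f x) (g x))"
proof (rule convex_onI)
  show "convex S" using assms(1) by (rule convex_on_imp_convex)
  fix t :: real and x y assume t: "0 < t" "t < 1" and xy: "x \<in> S" "y \<in> S"
  let ?z = "(1 - t) *\<^sub>R x + t *\<^sub>R y"
  have "f ?z \<le> (1 - t) * max (f x) (g x) + t * max (f y) (g y)"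
    using convex_onD[OF assms(1), of t x y] t xy
    by (smt (verit) max.cobounded1 mult_left_mono)
  moreover have "g ?z \<le> (1 - t) * max (f x) (g x) + t * max (f y) (g y)"
    using convex_onD[OF assms(2), of t x y] t xy
    by (smt (verit) max.cobounded2 mult_left_mono)
  ultimately show "max (f ?z) (g ?z) \<le> (1 - t) * max (f x) (g x) + t * max (f y) (g y)"
    by simp
qed

lemma convex_on_compose_affine:
  fixes h :: "real \<Rightarrow> real"
  assumes "convex_on S' h" "convex S" "\<And>x. x \<in> S \<Longrightarrow> c * x + d \<in> S'"
  shows "convex_on S (\<lambda>x. h (c * x + d))"
proof (rule convex_onI)
  fix t x y :: real assume t: "0 < t" "t < 1" and xy: "x \<in> S" "y \<in> S"
  have "c * ((1 - t) * x + t * y) + d = (1 - t) * (c * x + d) + t * (c * y + d)"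
    by algebra
  then show "h (c * ((1 - t) *\<^sub>R x + t *\<^sub>R y) + d) \<le> (1 - t) * h (c * x + d) + t * h (c * y + d)"
    using convex_onD[OF assms(1), of t "c * x + d" "c * y + d"] t xy assms(3) by simp
qed (fact assms(2))

lemma convex_on_limit:
  fixes f :: "nat \<Rightarrow> 'a::real_vector \<Rightarrow> real"
  assumes "convex S" "\<And>n. convex_on S (f n)" "\<And>x. x \<in> S \<Longrightarrow> (\<lambda>n. f n x) \<longlonglongrightarrow> g x"
  shows "convex_on S g"
proof (rule convex_onI)
  fix t :: real and x y assume t: "0 < t" "t < 1" and xy: "x \<in> S" "y \<in> S"
  let ?z = "(1 - t) *\<^sub>R x + t *\<^sub>R y"
  have "?z \<in> S" using convexD_alt[OF assms(1) xy] t by simp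
  then have "(\<lambda>n. f n ?z) \<longlonglongrightarrow> g ?z" by (rule assms(3))
  moreover have "(\<lambda>n. (1 - t) * f n x + t * f n y) \<longlonglongrightarrow> (1 - t) * g x + t * g y"
    using xy by (intro tendsto_intros assms(3))
  moreover have "\<forall>n. f n ?z \<le> (1 - t) * f n x + t * f n y"
    using convex_onD[OF assms(2)] t xy by simp
  ultimately show "g ?z \<le> (1 - t) * g x + t * g y"
    by (blast intro: LIMSEQ_le)
qed (fact assms(1))

lemma affine_convex_concave_on:
  fixes g :: "real \<Rightarrow> real"
  assumes "\<And>a b t. g ((1 - t) * a + t * b) = (1 - t) * g a + t * g b" "convex S"
  shows "convex_on S g" "concave_on S g"
  by (intro convex_onI concave_on_linorderI; simp add: assms)+

lemma contact_set_order_convex: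
  fixes f g :: "real \<Rightarrow> real"
  assumes f: "convex_on I f" and g: "concave_on I g" and below: "\<And>z. z \<in> I \<Longrightarrow> g z \<le> f z"
    and ab: "a \<in> I" "b \<in> I" "f a = g a" "f b = g b" and x: "a \<le> x" "x \<le> b"
  shows "x \<in> I \<and> f x = g x"
proof -
  have "x \<in> closed_segment a b" using x by (simp add: closed_segment_eq_real_ivl)
  then obtain t where t: "0 \<le> t" "t \<le> 1" and x_eq: "x = (1 - t) * a + t * b"
    by (auto simp: in_segment)
  have xI: "x \<in> I"
    using convexD_alt[OF convex_on_imp_convex[OF f] ab(1,2) t] x_eq by simp
  have "f x \<le> (1 - t) * f a + t * f b"
    using convex_onD[OF f t ab(1,2)] x_eq by simp
  also have "\<dots> = (1 - t) * g a + t * g b" using ab(3,4) by simp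
  also have "\<dots> \<le> g x"
    using concave_onD[OF g t ab(1,2)] x_eq by simp
  finally show ?thesis using below[OF xI] xI by simp
qed

definition convex_in_p1 :: "(real \<Rightarrow> real \<Rightarrow> real) \<Rightarrow> bool" where
  "convex_in_p1 W \<longleftrightarrow> (\<forall>p2\<in>{0..1}. convex_on {0..1} (\<lambda>p1. W p1 p2))"

definition convex_in_p2 :: "(real \<Rightarrow> real \<Rightarrow> real) \<Rightarrow> bool" where
  "convex_in_p2 W \<longleftrightarrow> (\<forall>p1\<in>{0..1}. convex_on {0..1} (\<lambda>p2. W p1 p2))"

lemma region_contiguous_p1:
  assumes "convex_in_p1 V" "\<And>p2. p2 \<in> {0..1} \<Longrightarrow> concave_on {0..1} (\<lambda>p1. Va p1 p2)"
    and "\<And>p1 p2. p1 \<in> {0..1} \<Longrightarrow> p2 \<in> {0..1} \<Longrightarrow> Va p1 p2 \<le> V p1 p2"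
  shows "contiguous_p1 (region V Va)"
  unfolding contiguous_p1_def region_def
proof (clarsimp simp del: atLeastAtMost_iff)
  fix x1 x2 p2 x assume "x1 \<in> {0..1}" "x2 \<in> {0..1}" "p2 \<in> {0..1}"
    "V x1 p2 = Va x1 p2" "V x2 p2 = Va x2 p2" "x1 \<le> x" "x \<le> x2"
  then show "x \<in> {0..1} \<and> V x p2 = Va x p2"
    using assms unfolding convex_in_p1_def by (intro contact_set_order_convex) auto
qed

lemma region_contiguous_p2:
  assumes "convex_in_p2 V" "\<And>p1. p1 \<in> {0..1} \<Longrightarrow> concave_on {0..1} (\<lambda>p2. Va p1 p2)"
    and "\<And>p1 p2. p1 \<in> {0..1} \<Longrightarrow> p2 \<in> {0..1} \<Longrightarrow> Va p1 p2 \<le> V p1 p2"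
  shows "contiguous_p2 (region V Va)"
  unfolding contiguous_p2_def region_def
proof (clarsimp simp del: atLeastAtMost_iff)
  fix y1 y2 p1 y assume "y1 \<in> {0..1}" "y2 \<in> {0..1}" "p1 \<in> {0..1}"
    "V p1 y1 = Va p1 y1" "V p1 y2 = Va p1 y2" "y1 \<le> y" "y \<le> y2"
  then show "y \<in> {0..1} \<and> V p1 y = Va p1 y"
    using assms unfolding convex_in_p2_def by (intro contact_set_order_convex) auto
qed

lemma V_Bb_affine_p1:
  "V_Bb l0 l1 \<beta> Rl W ((1 - t) * a + t * b) p2 = (1 - t) * V_Bb l0 l1 \<beta> Rl W a p2 + t * V_Bb l0 l1 \<beta> Rl W b p2"
  unfolding V_Bb_def by algebra

lemma V_Bb_affine_p2:
  "V_Bb l0 l1 \<beta> Rl W p1 ((1 - t) * a + t * b) = (1 - t) * V_Bb l0 l1 \<beta> Rl W p1 a + t * V_Bb l0 l1 \<beta> Rl W p1 b"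
  unfolding V_Bb_def by algebra

lemma V_B1_affine_p1:
  "V_B1 l0 l1 \<beta> Rh W ((1 - t) * a + t * b) p2 = (1 - t) * V_B1 l0 l1 \<beta> Rh W a p2 + t * V_B1 l0 l1 \<beta> Rh W b p2"
  unfolding V_B1_def by algebra

lemma V_B2_affine_p2:
  "V_B2 l0 l1 \<beta> Rh W p1 ((1 - t) * a + t * b) = (1 - t) * V_B2 l0 l1 \<beta> Rh W p1 a + t * V_B2 l0 l1 \<beta> Rh W p1 b"
  unfolding V_B2_def by algebra

definition bellman_op ::
  "real \<Rightarrow> real \<Rightarrow> real \<Rightarrow> real \<Rightarrow> real \<Rightarrow> (real \<Rightarrow> real \<Rightarrow> real) \<Rightarrow> real \<Rightarrow> real \<Rightarrow> real" where
  "bellman_op l0 l1 \<beta> Rl Rh W p1 p2 =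
     max (V_Bb l0 l1 \<beta> Rl W p1 p2) (max (V_B1 l0 l1 \<beta> Rh W p1 p2) (V_B2 l0 l1 \<beta> Rh W p1 p2))"

lemma abs_convex_comb_le:
  fixes a b e t :: real
  assumes "\<bar>a\<bar> \<le> e" "\<bar>b\<bar> \<le> e" "0 \<le> t" "t \<le> 1"
  shows "\<bar>(1 - t) * a + t * b\<bar> \<le> e"
proof -
  have "\<bar>(1 - t) * a + t * b\<bar> \<le> (1 - t) * \<bar>a\<bar> + t * \<bar>b\<bar>"
    using assms(3,4) by (simp add: abs_mult order_trans[OF abs_triangle_ineq])
  also have "\<dots> \<le> (1 - t) * e + t * e"
    using assms by (intro add_mono mult_left_mono) auto
  finally show ?thesis by (simp add: algebra_simps)
qed

lemma abs_max3_diff_le: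
  fixes a1 a2 a3 b1 b2 b3 e :: real
  assumes "\<bar>a1 - b1\<bar> \<le> e" "\<bar>a2 - b2\<bar> \<le> e" "\<bar>a3 - b3\<bar> \<le> e"
  shows "\<bar>max a1 (max a2 a3) - max b1 (max b2 b3)\<bar> \<le> e"
  using assms unfolding max_def abs_le_iff by auto

context
  fixes l0 l1 \<beta> Rl Rh :: real
  assumes l: "0 \<le> l0" "l0 \<le> l1" "l1 \<le> 1" and discount: "0 \<le> \<beta>" "\<beta> < 1"
begin

lemma T_range:
  assumes "p \<in> {0..1}" shows "T l0 l1 p \<in> {0..1}"
proof -
  have "0 \<le> (l1 - l0) * p" "(l1 - l0) * p \<le> l1 - l0"
    using assms l by (auto intro: mult_right_le_one_le)
  then show ?thesis unfolding T_def using l by simp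
qed

(* Sensing channel 2 only moves the belief about channel 1 affinely, so V_B2 is
   convex in p1 whenever the continuation value is; symmetrically for V_B1 in p2. *)
lemma V_B2_convex_p1:
  assumes "convex_in_p1 W" "p2 \<in> {0..1}"
  shows "convex_on {0..1} (\<lambda>p1. V_B2 l0 l1 \<beta> Rh W p1 p2)"
proof -
  have "convex_on {0..1} (\<lambda>p1. W ((l1 - l0) * p1 + l0) q)" if "q \<in> {0..1}" for q
    using assms(1) that T_range unfolding convex_in_p1_def T_def
    by (intro convex_on_compose_affine) auto
  then show ?thesis unfolding V_B2_def T_def
    using assms(2) discount l by (intro convex_on_add convex_on_const[THEN iffD2] convex_on_cmul) auto
qed

lemma V_B1_convex_p2:
  assumes "convex_in_p2 W" "p1 \<in> {0..1}"
  shows "convex_on {0..1} (\<lambda>p2. V_B1 l0 l1 \<beta> Rh W p1 p2)"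
proof -
  have "convex_on {0..1} (\<lambda>p2. W q ((l1 - l0) * p2 + l0))" if "q \<in> {0..1}" for q
    using assms(1) that T_range unfolding convex_in_p2_def T_def
    by (intro convex_on_compose_affine) auto
  then show ?thesis unfolding V_B1_def T_def
    using assms(2) discount l by (intro convex_on_add convex_on_const[THEN iffD2] convex_on_cmul) auto
qed

lemma bellman_op_convex_p1:
  assumes "convex_in_p1 W" shows "convex_in_p1 (bellman_op l0 l1 \<beta> Rl Rh W)"
  unfolding convex_in_p1_def bellman_op_def
proof (intro ballI convex_on_max)
  fix p2 :: real assume p2: "p2 \<in> {0..1}"
  show "convex_on {0..1} (\<lambda>p1. V_Bb l0 l1 \<beta> Rl W p1 p2)"
    by (rule affine_convex_concave_on(1)) (simp_all add: V_Bb_affine_p1)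
  show "convex_on {0..1} (\<lambda>p1. V_B1 l0 l1 \<beta> Rh W p1 p2)"
    by (rule affine_convex_concave_on(1)) (simp_all add: V_B1_affine_p1)
  show "convex_on {0..1} (\<lambda>p1. V_B2 l0 l1 \<beta> Rh W p1 p2)"
    using assms p2 by (rule V_B2_convex_p1)
qed

lemma bellman_op_convex_p2:
  assumes "convex_in_p2 W" shows "convex_in_p2 (bellman_op l0 l1 \<beta> Rl Rh W)"
  unfolding convex_in_p2_def bellman_op_def
proof (intro ballI convex_on_max)
  fix p1 :: real assume p1: "p1 \<in> {0..1}"
  show "convex_on {0..1} (\<lambda>p2. V_Bb l0 l1 \<beta> Rl W p1 p2)"
    by (rule affine_convex_concave_on(1)) (simp_all add: V_Bb_affine_p2)
  show "convex_on {0..1} (\<lambda>p2. V_B1 l0 l1 \<beta> Rh W p1 p2)"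
    using assms p1 by (rule V_B1_convex_p2)
  show "convex_on {0..1} (\<lambda>p2. V_B2 l0 l1 \<beta> Rh W p1 p2)"
    by (rule affine_convex_concave_on(1)) (simp_all add: V_B2_affine_p2)
qed

lemma bellman_op_contraction:
  assumes W: "\<And>q1 q2. q1 \<in> {0..1} \<Longrightarrow> q2 \<in> {0..1} \<Longrightarrow> \<bar>W q1 q2 - W' q1 q2\<bar> \<le> e"
    and p: "p1 \<in> {0..1}" "p2 \<in> {0..1}"
  shows "\<bar>bellman_op l0 l1 \<beta> Rl Rh W p1 p2 - bellman_op l0 l1 \<beta> Rl Rh W' p1 p2\<bar> \<le> \<beta> * e"
proof -
  define d where "d q1 q2 = W q1 q2 - W' q1 q2" for q1 q2
  have d: "\<bar>d q1 q2\<bar> \<le> e" if "q1 \<in> {0..1}" "q2 \<in> {0..1}" for q1 q2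
    using W[OF that] by (simp add: d_def)
  have discounted: "\<bar>\<beta> * c\<bar> \<le> \<beta> * e" if "\<bar>c\<bar> \<le> e" for c
    using that discount by (simp add: abs_mult mult_left_mono)
  have l01: "l0 \<in> {0..1}" "l1 \<in> {0..1}" using l by auto
  have T01: "T l0 l1 p1 \<in> {0..1}" "T l0 l1 p2 \<in> {0..1}" using p by (simp_all only: T_range)
  have "V_Bb l0 l1 \<beta> Rl W p1 p2 - V_Bb l0 l1 \<beta> Rl W' p1 p2
      = \<beta> * ((1 - p2) * ((1 - p1) * d l0 l0 + p1 * d l1 l0) + p2 * ((1 - p1) * d l0 l1 + p1 * d l1 l1))"
    unfolding V_Bb_def d_def by algebra
  moreover have "V_B1 l0 l1 \<beta> Rh W p1 p2 - V_B1 l0 l1 \<beta> Rh W' p1 p2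
      = \<beta> * ((1 - p1) * d l0 (T l0 l1 p2) + p1 * d l1 (T l0 l1 p2))"
    unfolding V_B1_def d_def by algebra
  moreover have "V_B2 l0 l1 \<beta> Rh W p1 p2 - V_B2 l0 l1 \<beta> Rh W' p1 p2
      = \<beta> * ((1 - p2) * d (T l0 l1 p1) l0 + p2 * d (T l0 l1 p1) l1)"
    unfolding V_B2_def d_def by algebra
  ultimately show ?thesis
    unfolding bellman_op_def using p l01 T01
    by (intro abs_max3_diff_le) (simp_all add: discounted abs_convex_comb_le d)
qed

lemma value_iterates_convex:
  "convex_in_p1 ((bellman_op l0 l1 \<beta> Rl Rh ^^ n) (\<lambda>_ _. 0)) \<and>
   convex_in_p2 ((bellman_op l0 l1 \<beta> Rl Rh ^^ n) (\<lambda>_ _. 0))"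
proof (induction n)
  case 0
  show ?case by (simp add: convex_in_p1_def convex_in_p2_def convex_on_const)
next
  case (Suc n)
  then show ?case by (simp add: bellman_op_convex_p1 bellman_op_convex_p2)
qed

context
  fixes V :: "real \<Rightarrow> real \<Rightarrow> real"
  assumes bellman: "bellman_solution l0 l1 \<beta> Rl Rh V"
begin

lemma value_function_fixpoint:
  assumes "p1 \<in> {0..1}" "p2 \<in> {0..1}"
  shows "V p1 p2 = bellman_op l0 l1 \<beta> Rl Rh V p1 p2"
proof -
  have "\<forall>p1\<in>{0..1}. \<forall>p2\<in>{0..1}. V p1 p2 = bellman_op l0 l1 \<beta> Rl Rh V p1 p2"
    using bellman unfolding bellman_solution_def bellman_op_def by (rule conjunct2)
  then have "\<forall>p2\<in>{0..1}. V p1 p2 = bellman_op l0 l1 \<beta> Rl Rh V p1 p2"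
    using assms(1) by (rule bspec)
  then show ?thesis using assms(2) by (rule bspec)
qed

(* Value iteration converges pointwise to V, with error at most beta^n times a
   bound of V. *)
lemma value_iteration_converges:
  assumes "p1 \<in> {0..1}" "p2 \<in> {0..1}"
  shows "(\<lambda>n. (bellman_op l0 l1 \<beta> Rl Rh ^^ n) (\<lambda>_ _. 0) p1 p2) \<longlonglongrightarrow> V p1 p2"
proof -
  let ?it = "\<lambda>n. (bellman_op l0 l1 \<beta> Rl Rh ^^ n) (\<lambda>_ _. 0)"
  have "\<exists>M. \<forall>q1\<in>{0..1}. \<forall>q2\<in>{0..1}. \<bar>V q1 q2\<bar> \<le> M"
    using bellman unfolding bellman_solution_def by (rule conjunct1)
  then obtain M where M: "\<And>q1 q2. q1 \<in> {0..1} \<Longrightarrow> q2 \<in> {0..1} \<Longrightarrow> \<bar>V q1 q2\<bar> \<le> M"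
    by blast
  have error: "\<bar>V q1 q2 - ?it n q1 q2\<bar> \<le> \<beta> ^ n * M" if "q1 \<in> {0..1}" "q2 \<in> {0..1}" for n q1 q2
    using that
  proof (induction n arbitrary: q1 q2)
    case 0
    then show ?case using M by simp
  next
    case (Suc n)
    have "\<bar>bellman_op l0 l1 \<beta> Rl Rh V q1 q2 - bellman_op l0 l1 \<beta> Rl Rh (?it n) q1 q2\<bar>
        \<le> \<beta> * (\<beta> ^ n * M)"
      by (rule bellman_op_contraction[OF Suc.IH Suc.prems])
    then show ?case using value_function_fixpoint[OF Suc.prems] by simp
  qed
  have "\<forall>n. norm (?it n p1 p2 - V p1 p2) \<le> \<beta> ^ n * M"
    using error[OF assms] by (simp add: abs_minus_commute)
  moreover have "(\<lambda>n. \<beta> ^ n * M) \<longlonglongrightarrow> 0"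
    using discount by (simp add: LIMSEQ_power_zero tendsto_mult_left_zero)
  ultimately have "(\<lambda>n. ?it n p1 p2 - V p1 p2) \<longlonglongrightarrow> 0"
    by (rule Lim_null_comparison[OF always_eventually])
  then show ?thesis by (simp add: LIM_zero_iff)
qed

(* Hence V is separately convex, as a pointwise limit of separately convex iterates. *)
lemma value_function_convex_p1: "convex_in_p1 V"
  unfolding convex_in_p1_def
proof
  fix p2 :: real assume p2: "p2 \<in> {0..1}"
  let ?it = "\<lambda>n p1. (bellman_op l0 l1 \<beta> Rl Rh ^^ n) (\<lambda>_ _. 0) p1 p2"
  show "convex_on {0..1} (\<lambda>p1. V p1 p2)"
  proof (rule convex_on_limit[where f = ?it])
    show "convex_on {0..1} (?it n)" for n
      using value_iterates_convex p2 unfolding convex_in_p1_def by blast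
    show "(\<lambda>n. ?it n p1) \<longlonglongrightarrow> V p1 p2" if "p1 \<in> {0..1}" for p1
      using that p2 by (rule value_iteration_converges)
  qed simp
qed

lemma value_function_convex_p2: "convex_in_p2 V"
  unfolding convex_in_p2_def
proof
  fix p1 :: real assume p1: "p1 \<in> {0..1}"
  let ?it = "\<lambda>n p2. (bellman_op l0 l1 \<beta> Rl Rh ^^ n) (\<lambda>_ _. 0) p1 p2"
  show "convex_on {0..1} (\<lambda>p2. V p1 p2)"
  proof (rule convex_on_limit[where f = ?it])
    show "convex_on {0..1} (?it n)" for n
      using value_iterates_convex p1 unfolding convex_in_p2_def by blast
    show "(\<lambda>n. ?it n p2) \<longlonglongrightarrow> V p1 p2" if "p2 \<in> {0..1}" for p2
      using p1 that by (rule value_iteration_converges)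
  qed simp
qed

lemma value_function_dominates:
  assumes "p1 \<in> {0..1}" "p2 \<in> {0..1}"
  shows "V_Bb l0 l1 \<beta> Rl V p1 p2 \<le> V p1 p2" "V_B1 l0 l1 \<beta> Rh V p1 p2 \<le> V p1 p2"
    "V_B2 l0 l1 \<beta> Rh V p1 p2 \<le> V p1 p2"
  using value_function_fixpoint[OF assms] unfolding bellman_op_def by simp_all

end

end

theorem theorem1:
  fixes l0 l1 \<beta> Rl Rh :: real and V :: "real \<Rightarrow> real \<Rightarrow> real"
  assumes "0 \<le> l0" "l0 \<le> l1" "l1 \<le> 1"
    and "0 \<le> \<beta>" "\<beta> < 1"
    and "0 < Rl" "Rl < Rh" "Rh < 2 * Rl"
    and "bellman_solution l0 l1 \<beta> Rl Rh V"
  shows "contiguous_p1 (region V (V_Bb l0 l1 \<beta> Rl V)) \<and> contiguous_p2 (region V (V_Bb l0 l1 \<beta> Rl V))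
       \<and> contiguous_p1 (region V (V_B1 l0 l1 \<beta> Rh V))
       \<and> contiguous_p2 (region V (V_B2 l0 l1 \<beta> Rh V))"
proof -
  note setting = assms(1-5) and bellman = assms(9)
  have convex_V: "convex_in_p1 V" "convex_in_p2 V"
    using value_function_convex_p1[OF setting bellman] value_function_convex_p2[OF setting bellman] .
  note below_V = value_function_dominates[OF setting bellman]
  have "concave_on {0..1} (\<lambda>p1. V_Bb l0 l1 \<beta> Rl V p1 p2)" for p2
    by (rule affine_convex_concave_on(2)) (simp_all add: V_Bb_affine_p1)
  moreover have "concave_on {0..1} (\<lambda>p2. V_Bb l0 l1 \<beta> Rl V p1 p2)" for p1
    by (rule affine_convex_concave_on(2)) (simp_all add: V_Bb_affine_p2)
  moreover have "concave_on {0..1} (\<lambda>p1. V_B1 l0 l1 \<beta> Rh V p1 p2)" for p2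
    by (rule affine_convex_concave_on(2)) (simp_all add: V_B1_affine_p1)
  moreover have "concave_on {0..1} (\<lambda>p2. V_B2 l0 l1 \<beta> Rh V p1 p2)" for p1
    by (rule affine_convex_concave_on(2)) (simp_all add: V_B2_affine_p2)
  ultimately show ?thesis
    using convex_V below_V by (blast intro: region_contiguous_p1 region_contiguous_p2)
qed

end
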